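(* Fix parameters and a population size vector $\mathbf m$ as in the context, with Assumption (A). Let $\mathbf y^\star\in\arg\min_{\mathbf y\in\mathcal Y}\overline{SC}(\mathbf y)$ be any minimizer of the social cost, and let $d^\dagger=\min\{d\in\mathcal D: y^\star_d>0\}$, with $d^\dagger=D_{\max}+1$ if this set is empty. If $d^\dagger<D_{\max}$, then $y^\star_d=m_d$ for all $d>d^\dagger$.
   Context: Let $D_{\max}\in\mathbb N$, $\mathcal D=\{1,\dots,D_{\max}\}$, $\mathcal A=\{I,N,P\}$. A population size vector is $\mathbf m=(m_d)_{d\in\mathcal D}$ with $m_d>0$, $\sum_d m_d=1$. A social state is $\mathbf x=(x_{d,a})$ with $x_{d,a}\ge0$, $\sum_a x_{d,a}=m_d$. Parameters: $\tau_{DA}\in(0,1]$; $0\le L_P<L_U$, $\Delta L=L_U-L_P$; $0\le p_P^i<p_U^i\le1$; $\beta_{IA}\in(0,1]$; $K\in\mathbb N$; $c_P,c_I\ge0$; $\xi_{\rm cov}\in(0,1]$, $ded\ge0$. Define $w_d=d\,m_d/\sum_{d'}d'm_{d'}$, $g_{d,a}=x_{d,a}/m_d$, $g_{d,U}=g_{d,N}+g_{d,I}$, $\gamma(\mathbf x)=\beta_{IA}\sum_d w_d(g_{d,P}p_P^i+g_{d,U}p_U^i)$, $\lambda(\mathbf x)=\beta_{IA}\sum_d w_d(d-1)(g_{d,P}p_P^i+g_{d,U}p_U^i)$, $e(\mathbf x)=\gamma(\mathbf x)\sum_{k=1}^K\lambda(\mathbf x)^{k-1}$, $C_{d,P}(\mathbf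 x)=\tau_{DA}(1+d\,e(\mathbf x))L_P+c_P$, $C_{d,N}(\mathbf x)=\tau_{DA}(1+d\,e(\mathbf x))L_U$. Let $\mathcal Y=\prod_{d\in\mathcal D}[0,m_d]$ and for $\mathbf y\in\mathcal Y$ let $\mathbf X(\mathbf y)$ be the social state with $X_{d,P}=y_d$, $X_{d,N}=m_d-y_d$, $X_{d,I}=0$. The social cost is $\overline{SC}(\mathbf y)=\sum_{d\in\mathcal D}\big(y_d\,C_{d,P}(\mathbf X(\mathbf y))+(m_d-y_d)\,C_{d,N}(\mathbf X(\mathbf y))\big)$. Assumption (A): $L_P<(1-\xi_{\rm cov})L_U$ and $c_P>c_I+ded$. *)

theory Defs
  imports Complex_Main
begin

text \<open>Actions: I (insured), N (no protection), P (protected).\<close>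
datatype action = ActI | ActN | ActP

text \<open>Degrees are the natural numbers 1..Dmax. A population size vector is m :: nat => real,
  a social state is x :: nat => action => real (only indices d in 1..Dmax matter).\<close>

definition degs :: "nat \<Rightarrow> nat set" where
  "degs Dmax = {1..Dmax}"

definition pop_size_vector :: "nat \<Rightarrow> (nat \<Rightarrow> real) \<Rightarrow> bool" where
  "pop_size_vector Dmax m \<longleftrightarrow> (\<forall>d\<in>degs Dmax. m d > 0) \<and> (\<Sum>d\<in>degs Dmax. m d) = 1"

definition wgt :: "nat \<Rightarrow> (nat \<Rightarrow> real) \<Rightarrow> nat \<Rightarrow> real" where
  "wgt Dmax m d = real d * m d / (\<Sum>d'\<in>degs Dmax. real d' * m d')"

definition gfrac :: "(nat \<Rightarrow> real) \<Rightarrow> (nat \<Rightarrow> action \<Rightarrow> real) \<Rightarrow> nat \<Rightarrow> action \<Rightarrow> real" where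
  "gfrac m x d a = x d a / m d"

definition gU :: "(nat \<Rightarrow> real) \<Rightarrow> (nat \<Rightarrow> action \<Rightarrow> real) \<Rightarrow> nat \<Rightarrow> real" where
  "gU m x d = gfrac m x d ActN + gfrac m x d ActI"

definition gam :: "nat \<Rightarrow> (nat \<Rightarrow> real) \<Rightarrow> real \<Rightarrow> real \<Rightarrow> real \<Rightarrow> (nat \<Rightarrow> action \<Rightarrow> real) \<Rightarrow> real" where
  "gam Dmax m beta pP pU x =
     beta * (\<Sum>d\<in>degs Dmax. wgt Dmax m d * (gfrac m x d ActP * pP + gU m x d * pU))"

definition lam :: "nat \<Rightarrow> (nat \<Rightarrow> real) \<Rightarrow> real \<Rightarrow> real \<Rightarrow> real \<Rightarrow> (nat \<Rightarrow> action \<Rightarrow> real) \<Rightarrow> real" where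
  "lam Dmax m beta pP pU x =
     beta * (\<Sum>d\<in>degs Dmax. wgt Dmax m d * (real d - 1) * (gfrac m x d ActP * pP + gU m x d * pU))"

definition eprop :: "nat \<Rightarrow> (nat \<Rightarrow> real) \<Rightarrow> real \<Rightarrow> real \<Rightarrow> real \<Rightarrow> nat \<Rightarrow> (nat \<Rightarrow> action \<Rightarrow> real) \<Rightarrow> real" where
  "eprop Dmax m beta pP pU K x =
     gam Dmax m beta pP pU x * (\<Sum>k\<in>{1..K}. lam Dmax m beta pP pU x ^ (k - 1))"

definition costP :: "nat \<Rightarrow> (nat \<Rightarrow> real) \<Rightarrow> real \<Rightarrow> real \<Rightarrow> real \<Rightarrow> nat \<Rightarrow> real \<Rightarrow> real \<Rightarrow> real
    \<Rightarrow> nat \<Rightarrow> (nat \<Rightarrow> action \<Rightarrow> real) \<Rightarrow> real" where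
  "costP Dmax m beta pP pU K tau LP cP d x =
     tau * (1 + real d * eprop Dmax m beta pP pU K x) * LP + cP"

definition costN :: "nat \<Rightarrow> (nat \<Rightarrow> real) \<Rightarrow> real \<Rightarrow> real \<Rightarrow> real \<Rightarrow> nat \<Rightarrow> real \<Rightarrow> real
    \<Rightarrow> nat \<Rightarrow> (nat \<Rightarrow> action \<Rightarrow> real) \<Rightarrow> real" where
  "costN Dmax m beta pP pU K tau LU d x =
     tau * (1 + real d * eprop Dmax m beta pP pU K x) * LU"

definition Ybox :: "nat \<Rightarrow> (nat \<Rightarrow> real) \<Rightarrow> (nat \<Rightarrow> real) set" where
  "Ybox Dmax m = {y. \<forall>d\<in>degs Dmax. 0 \<le> y d \<and> y d \<le> m d}"

definition Xstate :: "(nat \<Rightarrow> real) \<Rightarrow> (nat \<Rightarrow> real) \<Rightarrow> nat \<Rightarrow> action \<Rightarrow> real" where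
  "Xstate m y d a = (case a of ActP \<Rightarrow> y d | ActN \<Rightarrow> m d - y d | ActI \<Rightarrow> 0)"

definition social_cost :: "nat \<Rightarrow> (nat \<Rightarrow> real) \<Rightarrow> real \<Rightarrow> real \<Rightarrow> real \<Rightarrow> nat \<Rightarrow> real \<Rightarrow> real \<Rightarrow> real
    \<Rightarrow> real \<Rightarrow> (nat \<Rightarrow> real) \<Rightarrow> real" where
  "social_cost Dmax m beta pP pU K tau LP LU cP y =
     (\<Sum>d\<in>degs Dmax.
        y d * costP Dmax m beta pP pU K tau LP cP d (Xstate m y)
      + (m d - y d) * costN Dmax m beta pP pU K tau LU d (Xstate m y))"

definition d_dagger :: "nat \<Rightarrow> (nat \<Rightarrow> real) \<Rightarrow> nat" where
  "d_dagger Dmax y = (if {d\<in>degs Dmax. y d > 0} = {} then Dmax + 1 else Min {d\<in>degs Dmax. y d > 0})"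

end

theory Submission imports Defs begin

text \<open>Shift a small amount \<open>\<delta>\<close> of protection from the least protected-positive degree
  \<open>d\<^sup>\<dagger>\<close> to a higher degree \<open>d\<close> that is not fully protected. The direct cost
  \<open>\<Sum>\<^sub>d \<tau>(L\<^sub>U m\<^sub>d - \<Delta>L y\<^sub>d) + c\<^sub>P y\<^sub>d\<close> does not see the shift, while
  the degree-weighted infection sums behind \<open>\<gamma>\<close> and \<open>\<lambda>\<close> can only decrease (since
  \<open>p\<^sub>P < p\<^sub>U\<close> and protection now sits at a higher degree), so \<open>e\<close> decreases; and the
  degree-weighted exposure \<open>\<Sum>\<^sub>d d(L\<^sub>U m\<^sub>d - \<Delta>L y\<^sub>d)\<close> strictly decreases. Hence the social
  cost strictly drops, contradicting minimality.\<close>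

lemma sum_fun_upd2:
  fixes f :: "'a \<Rightarrow> 'b \<Rightarrow> real"
  assumes "finite A" "a \<in> A" "b \<in> A" "a \<noteq> b"
  shows "(\<Sum>k\<in>A. f k ((y(a := u, b := v)) k))
       = (\<Sum>k\<in>A. f k (y k)) + (f a u - f a (y a)) + (f b v - f b (y b))"
proof -
  have rest: "(\<Sum>k\<in>A - {a} - {b}. f k ((y(a := u, b := v)) k)) = (\<Sum>k\<in>A - {a} - {b}. f k (y k))"
    by (rule sum.cong) auto
  have "(\<Sum>k\<in>A. g k) = g a + (g b + (\<Sum>k\<in>A - {a} - {b}. g k))" for g :: "'a \<Rightarrow> real"
    using assms by (simp add: sum.remove[of A a] sum.remove[of "A - {a}" b])
  from this[of "\<lambda>k. f k ((y(a := u, b := v)) k)"] this[of "\<lambda>k. f k (y k)"] rest assms(4)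
  show ?thesis by simp
qed

definition partial_geometric :: "nat \<Rightarrow> real \<Rightarrow> real" where
  "partial_geometric K l = (\<Sum>k\<in>{1..K}. l ^ (k - 1))"

lemma partial_geometric_nonneg: "0 \<le> l \<Longrightarrow> 0 \<le> partial_geometric K l"
  unfolding partial_geometric_def by (simp add: sum_nonneg)

lemma one_le_partial_geometric:
  assumes "1 \<le> K" "0 \<le> l"
  shows "1 \<le> partial_geometric K l"
proof -
  have "l ^ (1 - 1) \<le> partial_geometric K l"
    unfolding partial_geometric_def using assms by (intro member_le_sum) auto
  then show ?thesis by simp
qed

lemma partial_geometric_mono:
  "0 \<le> l' \<Longrightarrow> l' \<le> l \<Longrightarrow> partial_geometric K l' \<le> partial_geometric K l"
  unfolding partial_geometric_def by (intro sum_mono power_mono)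

lemma mult_partial_geometric_mono:
  assumes "0 \<le> g'" "g' \<le> g" "0 \<le> l'" "l' \<le> l"
  shows "g' * partial_geometric K l' \<le> g * partial_geometric K l"
  using assms partial_geometric_mono[OF assms(3,4)] partial_geometric_nonneg[of l' K]
  by (intro mult_mono) auto

definition degree_sum :: "nat \<Rightarrow> (nat \<Rightarrow> real) \<Rightarrow> real" where
  "degree_sum Dmax m = (\<Sum>d\<in>degs Dmax. real d * m d)"

text \<open>Infection sums of the pure protection profile \<open>y\<close>, with a degree weight \<open>f\<close>:
  \<open>f d = d\<close> gives \<open>\<gamma>\<close> and \<open>f d = d(d-1)\<close> gives \<open>\<lambda>\<close>, both up to the factor
  \<open>\<beta> / \<Sum>\<^sub>d d m\<^sub>d\<close>.\<close>
definition infection_moment ::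
    "nat \<Rightarrow> (nat \<Rightarrow> real) \<Rightarrow> (nat \<Rightarrow> real) \<Rightarrow> real \<Rightarrow> real \<Rightarrow> (nat \<Rightarrow> real) \<Rightarrow> real" where
  "infection_moment Dmax m f pP pU y = (\<Sum>d\<in>degs Dmax. f d * (y d * pP + (m d - y d) * pU))"

definition direct_cost :: "nat \<Rightarrow> (nat \<Rightarrow> real) \<Rightarrow> real \<Rightarrow> real \<Rightarrow> real \<Rightarrow> real \<Rightarrow> (nat \<Rightarrow> real) \<Rightarrow> real" where
  "direct_cost Dmax m tau LP LU cP y = (\<Sum>d\<in>degs Dmax. tau * (LU * m d - (LU - LP) * y d) + cP * y d)"

definition exposed_loss :: "nat \<Rightarrow> (nat \<Rightarrow> real) \<Rightarrow> real \<Rightarrow> real \<Rightarrow> (nat \<Rightarrow> real) \<Rightarrow> real" where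
  "exposed_loss Dmax m LP LU y = (\<Sum>d\<in>degs Dmax. real d * (LU * m d - (LU - LP) * y d))"

lemma degree_sum_pos:
  assumes "pop_size_vector Dmax m"
  shows "0 < degree_sum Dmax m"
proof -
  from assms obtain a where "a \<in> degs Dmax"
    by (fastforce simp: pop_size_vector_def)
  with assms show ?thesis
    unfolding degree_sum_def
    by (intro sum_pos2[of _ a]) (auto simp: degs_def pop_size_vector_def less_imp_le)
qed

lemma weighted_sum_Xstate:
  assumes "pop_size_vector Dmax m"
  shows "(\<Sum>d\<in>degs Dmax. wgt Dmax m d * f d
            * (gfrac m (Xstate m y) d ActP * pP + gU m (Xstate m y) d * pU))
       = infection_moment Dmax m (\<lambda>d. real d * f d) pP pU y / degree_sum Dmax m"
  unfolding infection_moment_def sum_divide_distrib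
proof (rule sum.cong)
  fix d assume "d \<in> degs Dmax"
  with assms have "0 < m d" by (simp add: pop_size_vector_def)
  with degree_sum_pos[OF assms]
  show "wgt Dmax m d * f d * (gfrac m (Xstate m y) d ActP * pP + gU m (Xstate m y) d * pU)
      = real d * f d * (y d * pP + (m d - y d) * pU) / degree_sum Dmax m"
    by (simp add: wgt_def degree_sum_def gU_def gfrac_def Xstate_def field_simps)
qed simp

lemma eprop_Xstate:
  assumes "pop_size_vector Dmax m"
  shows "eprop Dmax m beta pP pU K (Xstate m y)
       = beta * infection_moment Dmax m real pP pU y / degree_sum Dmax m
         * partial_geometric K
             (beta * infection_moment Dmax m (\<lambda>d. real d * (real d - 1)) pP pU y / degree_sum Dmax m)"
  using weighted_sum_Xstate[OF assms, of "\<lambda>_. 1"] weighted_sum_Xstate[OF assms, of "\<lambda>d. real d - 1"]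
  by (simp add: eprop_def gam_def lam_def partial_geometric_def mult.assoc)

lemma social_cost_eq:
  "social_cost Dmax m beta pP pU K tau LP LU cP y
     = direct_cost Dmax m tau LP LU cP y
       + tau * eprop Dmax m beta pP pU K (Xstate m y) * exposed_loss Dmax m LP LU y"
  unfolding social_cost_def direct_cost_def exposed_loss_def costP_def costN_def
    sum_distrib_left sum.distrib[symmetric]
  by (rule sum.cong) (simp_all add: algebra_simps)

lemma infection_moment_nonneg:
  assumes "y \<in> Ybox Dmax m" "\<And>d. d \<in> degs Dmax \<Longrightarrow> 0 \<le> f d" "0 \<le> pP" "0 \<le> pU"
  shows "0 \<le> infection_moment Dmax m f pP pU y"
  using assms unfolding infection_moment_def Ybox_def by (auto intro!: sum_nonneg)

lemma exposed_loss_nonneg: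
  assumes "y \<in> Ybox Dmax m" "0 \<le> LP" "LP \<le> LU"
  shows "0 \<le> exposed_loss Dmax m LP LU y"
  unfolding exposed_loss_def
proof (rule sum_nonneg)
  fix d assume "d \<in> degs Dmax"
  with assms(1) have "0 \<le> y d" "y d \<le> m d" by (auto simp: Ybox_def)
  then have "0 \<le> LU * (m d - y d) + LP * y d" using assms(2,3) by simp
  then have "0 \<le> LU * m d - (LU - LP) * y d" by (simp add: algebra_simps)
  then show "0 \<le> real d * (LU * m d - (LU - LP) * y d)" by simp
qed

definition transfer :: "nat \<Rightarrow> nat \<Rightarrow> real \<Rightarrow> (nat \<Rightarrow> real) \<Rightarrow> nat \<Rightarrow> real" where
  "transfer a b \<delta> y = y(a := y a - \<delta>, b := y b + \<delta>)"

context
  fixes Dmax :: nat and a b :: nat and \<delta> :: real and y :: "nat \<Rightarrow> real"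
  assumes a: "a \<in> degs Dmax" and b: "b \<in> degs Dmax" and ab: "a \<noteq> b"
begin

lemma sum_transfer:
  fixes f :: "nat \<Rightarrow> real \<Rightarrow> real"
  shows "(\<Sum>k\<in>degs Dmax. f k (transfer a b \<delta> y k))
     = (\<Sum>k\<in>degs Dmax. f k (y k)) + (f a (y a - \<delta>) - f a (y a)) + (f b (y b + \<delta>) - f b (y b))"
  unfolding transfer_def by (rule sum_fun_upd2) (use a b ab in \<open>auto simp: degs_def\<close>)

lemma transfer_in_Ybox:
  assumes "y \<in> Ybox Dmax m" "0 \<le> \<delta>" "\<delta> \<le> y a" "y b + \<delta> \<le> m b"
  shows "transfer a b \<delta> y \<in> Ybox Dmax m"
  using assms a b ab by (auto simp: Ybox_def transfer_def)

lemma direct_cost_transfer: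
  "direct_cost Dmax m tau LP LU cP (transfer a b \<delta> y) = direct_cost Dmax m tau LP LU cP y"
  unfolding direct_cost_def
    sum_transfer[of "\<lambda>d v. tau * (LU * m d - (LU - LP) * v) + cP * v"] by (simp add: algebra_simps)

lemma infection_moment_transfer:
  "infection_moment Dmax m f pP pU (transfer a b \<delta> y)
     = infection_moment Dmax m f pP pU y - \<delta> * (f b - f a) * (pU - pP)"
  unfolding infection_moment_def
    sum_transfer[of "\<lambda>d v. f d * (v * pP + (m d - v) * pU)"] by (simp add: algebra_simps)

lemma exposed_loss_transfer:
  "exposed_loss Dmax m LP LU (transfer a b \<delta> y)
     = exposed_loss Dmax m LP LU y - \<delta> * (real b - real a) * (LU - LP)"
  unfolding exposed_loss_def
    sum_transfer[of "\<lambda>d v. real d * (LU * m d - (LU - LP) * v)"] by (simp add: algebra_simps)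

end

text \<open>Positivity of \<open>e\<close> at \<open>y\<close>, needed for strictness, comes for free: the infection sum
  at \<open>y\<close> exceeds the nonnegative one at the transferred profile.\<close>
lemma social_cost_transfer_less:
  assumes pop: "pop_size_vector Dmax m"
    and "0 < tau" "0 \<le> LP" "LP < LU" "0 \<le> pP" "pP < pU" "0 < beta"
    and y: "y \<in> Ybox Dmax m"
    and a: "a \<in> degs Dmax" and b: "b \<in> degs Dmax" and "a < b"
    and "0 < \<delta>" "\<delta> \<le> y a" "y b + \<delta> \<le> m b" "1 \<le> K"
  shows "social_cost Dmax m beta pP pU K tau LP LU cP (transfer a b \<delta> y)
       < social_cost Dmax m beta pP pU K tau LP LU cP y"
proof -
  let ?y' = "transfer a b \<delta> y"
  let ?S = "degree_sum Dmax m"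
  let ?G = "infection_moment Dmax m real pP pU"
  let ?L = "infection_moment Dmax m (\<lambda>d. real d * (real d - 1)) pP pU"
  let ?W = "exposed_loss Dmax m LP LU"
  have ab: "a \<noteq> b" using \<open>a < b\<close> by simp
  have y': "?y' \<in> Ybox Dmax m"
    using transfer_in_Ybox[OF a b ab y] assms by simp
  have S: "0 < ?S" by (rule degree_sum_pos[OF pop])
  have ab_real: "1 \<le> real a" "real a < real b" using a \<open>a < b\<close> by (auto simp: degs_def)
  have "real a * (real a - 1) \<le> real b * (real b - 1)"
    using ab_real by (intro mult_mono) auto
  then have L_le: "?L ?y' \<le> ?L y"
    using assms infection_moment_transfer[OF a b ab] by (simp add: mult_nonneg_nonneg)
  have G_less: "?G ?y' < ?G y"
    using assms ab_real infection_moment_transfer[OF a b ab] by simp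
  have G'_nonneg: "0 \<le> ?G ?y'" and L'_nonneg: "0 \<le> ?L ?y'"
    using y' assms by (auto intro!: infection_moment_nonneg simp: degs_def)
  have W_less: "?W ?y' < ?W y"
    using assms ab_real exposed_loss_transfer[OF a b ab] by simp
  have W'_nonneg: "0 \<le> ?W ?y'"
    using exposed_loss_nonneg[OF y'] assms by simp
  define e where "e z = eprop Dmax m beta pP pU K (Xstate m z)" for z
  have e_le: "e ?y' \<le> e y"
    unfolding e_def eprop_Xstate[OF pop]
    using G_less G'_nonneg L_le L'_nonneg S \<open>0 < beta\<close>
    by (intro mult_partial_geometric_mono divide_right_mono mult_left_mono) auto
  have e_pos: "0 < e y"
    unfolding e_def eprop_Xstate[OF pop]
    using G_less G'_nonneg L_le L'_nonneg S \<open>0 < beta\<close>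
      one_le_partial_geometric[OF \<open>1 \<le> K\<close>, of "beta * ?L y / ?S"]
    by (intro mult_pos_pos divide_pos_pos) auto
  have "tau * e ?y' * ?W ?y' \<le> tau * e y * ?W ?y'"
    using e_le W'_nonneg \<open>0 < tau\<close> by (intro mult_right_mono mult_left_mono) auto
  also have "\<dots> < tau * e y * ?W y"
    using W_less e_pos \<open>0 < tau\<close> by simp
  finally show ?thesis
    unfolding social_cost_eq direct_cost_transfer[OF a b ab] e_def by simp
qed

lemma d_dagger_mem:
  assumes "d_dagger Dmax y \<le> Dmax"
  shows "d_dagger Dmax y \<in> degs Dmax" "0 < y (d_dagger Dmax y)"
proof -
  let ?D = "{d \<in> degs Dmax. 0 < y d}"
  have "?D \<noteq> {}" using assms by (auto simp: d_dagger_def split: if_splits)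
  then have "d_dagger Dmax y \<in> ?D"
    unfolding d_dagger_def by (simp only: if_False) (intro Min_in, auto simp: degs_def)
  then show "d_dagger Dmax y \<in> degs Dmax" "0 < y (d_dagger Dmax y)" by simp_all
qed

theorem theorem4:
  fixes Dmax K :: nat and m ystar :: "nat \<Rightarrow> real"
    and tau LP LU pP pU beta cP cI xi ded :: real
  assumes "Dmax \<ge> 1"
    and "pop_size_vector Dmax m"
    and "0 < tau" "tau \<le> 1"
    and "0 \<le> LP" "LP < LU"
    and "0 \<le> pP" "pP < pU" "pU \<le> 1"
    and "0 < beta" "beta \<le> 1"
    and "K \<ge> 1"
    and "cP \<ge> 0" "cI \<ge> 0"
    and "0 < xi" "xi \<le> 1" "ded \<ge> 0"
    and A1: "LP < (1 - xi) * LU"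
    and A2: "cP > cI + ded"
    and ymem: "ystar \<in> Ybox Dmax m"
    and ymin: "\<forall>y\<in>Ybox Dmax m. social_cost Dmax m beta pP pU K tau LP LU cP ystar
                                 \<le> social_cost Dmax m beta pP pU K tau LP LU cP y"
    and "d_dagger Dmax ystar < Dmax"
  shows "\<forall>d\<in>degs Dmax. d > d_dagger Dmax ystar \<longrightarrow> ystar d = m d"
proof (intro ballI impI, rule ccontr)
  let ?a = "d_dagger Dmax ystar"
  fix d assume d: "d \<in> degs Dmax" "?a < d" "ystar d \<noteq> m d"
  have a: "?a \<in> degs Dmax" "0 < ystar ?a"
    using d_dagger_mem[of Dmax ystar] \<open>?a < Dmax\<close> by simp_all
  define \<delta> where "\<delta> = min (ystar ?a) (m d - ystar d)"
  have "ystar d < m d" using ymem d by (force simp: Ybox_def)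
  then have "0 < \<delta>" "\<delta> \<le> ystar ?a" "ystar d + \<delta> \<le> m d"
    using a by (auto simp: \<delta>_def)
  then have "social_cost Dmax m beta pP pU K tau LP LU cP (transfer ?a d \<delta> ystar)
           < social_cost Dmax m beta pP pU K tau LP LU cP ystar"
    using assms a d by (intro social_cost_transfer_less) auto
  moreover have "transfer ?a d \<delta> ystar \<in> Ybox Dmax m"
    using transfer_in_Ybox[OF a(1) d(1)] d ymem \<open>0 < \<delta>\<close> \<open>\<delta> \<le> ystar ?a\<close> \<open>ystar d + \<delta> \<le> m d\<close>
    by simp
  ultimately show False using ymin by fastforce
qed

end
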